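(* Let $D$ be a finite set of documents, each document being a finite set of terms, and let $m$ be a positive integer dividing $|D|$. For a bijection $\pi$ assigning to the documents the identifiers $1,\dots,|D|$, let $\mathcal{P}(\pi)$ be the total Delta-encoded size of all postings lists of the single-node index in which document $d$ has identifier $\pi(d)$. For a partition $g$ of $D$ into $m$ disjoint sets (nodes) of $|D|/m$ documents each, let $\mathcal{P}^m(\pi,g)$ be the sum over the $m$ nodes of the total Delta-encoded size of all postings lists of that node's index, where within each node the documents receive identifiers $1,\dots,|D|/m$ in the order induced by $\pi$. If $\pi$ is drawn uniformly at random among all $|D|!$ bijections and, independently, $g$ is drawn uniformly at random among all such equal partitions, then \[\mathbb{E}_{\pi,g}\left[\mathcal{P}(\pi)-\mathcal{P}^m(\pi,g)\right]\ \ge\ 0\ .\]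
   Context: Index model: for an index over a set of documents with distinct identifiers, the postings list of a term $t$ consists of the identifiers $1\le d^t_1<d^t_2<\dots<d^t_{n_t}$ of the documents containing $t$; its encoded size is $\delta(d^t_1)+\sum_{j=2}^{n_t}\delta(d^t_j-d^t_{j-1})$, where for a positive integer $k$ the Delta encoding length is $\delta(k)=1+\lfloor\log_2 k\rfloor+2\lfloor\log_2(1+\lfloor\log_2 k\rfloor)\rfloor$. The total size of an index is the sum of the encoded sizes of the postings lists of all terms occurring in its documents (no dictionary overhead is counted). *)

theory Defs
  imports Complex_Main "HOL-Library.FuncSet"
begin

definition delta :: "nat \<Rightarrow> nat" where
  "delta k = 1 + nat \<lfloor>log 2 (real k)\<rfloor>
             + 2 * nat \<lfloor>log 2 (real (1 + nat \<lfloor>log 2 (real k)\<rfloor>))\<rfloor>"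

fun gap_size :: "nat \<Rightarrow> nat list \<Rightarrow> nat" where
  "gap_size p [] = 0"
| "gap_size p (x # xs) = delta (x - p) + gap_size x xs"

definition list_size :: "nat list \<Rightarrow> nat" where
  "list_size xs = gap_size 0 xs"

definition postings :: "'t set set \<Rightarrow> ('t set \<Rightarrow> nat) \<Rightarrow> 't \<Rightarrow> nat list" where
  "postings S ident t = sorted_list_of_set (ident ` {d \<in> S. t \<in> d})"

definition index_size :: "'t set set \<Rightarrow> ('t set \<Rightarrow> nat) \<Rightarrow> nat" where
  "index_size S ident = (\<Sum>t \<in> \<Union>S. list_size (postings S ident t))"

text \<open>Identifier assignments: bijections from D onto {1..|D|} (extensional, so
  there are exactly |D|! of them).\<close>
definition id_assignments :: "'t set set \<Rightarrow> ('t set \<Rightarrow> nat) set" where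
  "id_assignments D = {\<pi>. \<pi> \<in> extensional D \<and> bij_betw \<pi> D {1..card D}}"

definition equal_partitions :: "'t set set \<Rightarrow> nat \<Rightarrow> ('t set \<Rightarrow> nat) set" where
  "equal_partitions D m = {g. g \<in> D \<rightarrow>\<^sub>E {..<m} \<and>
       (\<forall>i<m. card {d \<in> D. g d = i} = card D div m)}"

definition local_ids :: "'t set set \<Rightarrow> ('t set \<Rightarrow> nat) \<Rightarrow> 't set \<Rightarrow> nat" where
  "local_ids S \<pi> d = card {d' \<in> S. \<pi> d' \<le> \<pi> d}"

definition P_single :: "'t set set \<Rightarrow> ('t set \<Rightarrow> nat) \<Rightarrow> nat" where
  "P_single D \<pi> = index_size D \<pi>"

definition P_multi :: "'t set set \<Rightarrow> nat \<Rightarrow> ('t set \<Rightarrow> nat) \<Rightarrow> ('t set \<Rightarrow> nat) \<Rightarrow> nat" where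
  "P_multi D m \<pi> g = (\<Sum>i<m. let S = {d \<in> D. g d = i} in index_size S (local_ids S \<pi>))"

end

theory Submission
  imports Defs
begin

text \<open>Send a pair (\<pi>, g) to the single-node assignment \<sigma> that gives the documents of node i
  the identifiers i n + 1, \<dots>, (i + 1) n, where n = |D|/m, in the order of \<pi>. Under \<sigma> every
  postings list is the concatenation of the node lists shifted by multiples of n; the gap across
  a node boundary is at least the first local identifier and Delta is monotone, so
  P_multi D m \<pi> g \<le> P_single D \<sigma>. Let h q be the node of the document at position q of \<pi>.
  Then (\<pi>, g) \<mapsto> (\<sigma>, h \<circ> \<sigma>) is an injective, hence bijective, self-map of the set of all pairs:
  \<sigma> determines g, and h together with the local ranks determines \<pi>.\<close>

lemma nat_floor_log2_mono:
  assumes "a \<le> b"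
  shows "nat \<lfloor>log 2 (real a)\<rfloor> \<le> nat \<lfloor>log 2 (real b)\<rfloor>"
proof (cases "a = 0")
  case True
  then show ?thesis by (simp add: log_def)
next
  case False
  then have "log 2 (real a) \<le> log 2 (real b)" using assms by simp
  then show ?thesis by (intro nat_mono floor_mono)
qed

lemma delta_mono: "a \<le> b \<Longrightarrow> delta a \<le> delta b"
  unfolding delta_def
  by (intro add_mono mult_le_mono2 nat_floor_log2_mono) (simp_all add: nat_floor_log2_mono)

lemma gap_size_le_shift: "q \<le> p + c \<Longrightarrow> gap_size p xs \<le> gap_size q (map ((+) c) xs)"
proof (induction xs arbitrary: p q)
  case Nil
  then show ?case by simp
next
  case (Cons x xs)
  have "delta (x - p) \<le> delta (c + x - q)" using Cons.prems by (intro delta_mono) simp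
  moreover have "gap_size x xs \<le> gap_size (c + x) (map ((+) c) xs)" using Cons.IH by simp
  ultimately show ?case by simp
qed

lemma gap_size_append: "gap_size p (xs @ ys) = gap_size p xs + gap_size (last (p # xs)) ys"
  by (induction xs arbitrary: p) auto

lemma sorted_list_of_set_Un_less:
  fixes A B :: "'a::linorder set"
  assumes "finite A" "finite B" "\<forall>a\<in>A. \<forall>b\<in>B. a < b"
  shows "sorted_list_of_set (A \<union> B) = sorted_list_of_set A @ sorted_list_of_set B"
proof -
  have "A \<inter> B = {}" using assms(3) by auto
  then show ?thesis
    using assms by (subst sorted_list_of_set_unique[symmetric])
      (auto simp: sorted_wrt_append card_Un_disjoint)
qed

lemma sorted_list_of_set_image_add:
  fixes Y :: "nat set"
  assumes "finite Y"
  shows "sorted_list_of_set ((+) c ` Y) = map ((+) c) (sorted_list_of_set Y)"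
proof -
  have "sorted_wrt (<) (map ((+) c) (sorted_list_of_set Y))"
    by (simp add: sorted_wrt_map)
  then show ?thesis
    using assms by (subst sorted_list_of_set_unique[symmetric]) (auto simp: card_image)
qed

text \<open>The gap at a block boundary is at least the first identifier of the new block.\<close>

lemma list_size_blocks_le:
  fixes Y :: "nat \<Rightarrow> nat set"
  assumes "\<forall>i<k. finite (Y i) \<and> Y i \<subseteq> {1..n}"
  shows "(\<Sum>i<k. list_size (sorted_list_of_set (Y i)))
         \<le> list_size (sorted_list_of_set (\<Union>i<k. (+) (i * n) ` Y i))"
  using assms
proof (induction k)
  case 0
  then show ?case by simp
next
  case (Suc k)
  let ?U = "\<Union>i<k. (+) (i * n) ` Y i"
  let ?xs = "sorted_list_of_set ?U"
  have fin: "finite ?U" "finite (Y k)" using Suc.prems by auto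
  have U_le: "u \<le> k * n" if "u \<in> ?U" for u
  proof -
    obtain i y where "i < k" "y \<in> Y i" "u = i * n + y" using \<open>u \<in> ?U\<close> by auto
    moreover have "y \<le> n" using Suc.prems \<open>i < k\<close> \<open>y \<in> Y i\<close>
      by (metis atLeastAtMost_iff less_SucI subsetD)
    moreover have "i * n + n \<le> k * n" using \<open>i < k\<close>
      by (metis add.commute less_eq_Suc_le mult_Suc mult_le_mono1)
    ultimately show ?thesis by linarith
  qed
  have "k * n < b" if "b \<in> (+) (k * n) ` Y k" for b
    using Suc.prems that by force
  then have "\<forall>a\<in>?U. \<forall>b\<in>(+) (k * n) ` Y k. a < b"
    using U_le le_less_trans by blast
  then have "sorted_list_of_set (?U \<union> (+) (k * n) ` Y k)
             = ?xs @ map ((+) (k * n)) (sorted_list_of_set (Y k))"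
    using fin by (simp add: sorted_list_of_set_Un_less sorted_list_of_set_image_add)
  moreover have "(\<Union>i<Suc k. (+) (i * n) ` Y i) = ?U \<union> (+) (k * n) ` Y k"
    by (simp add: lessThan_Suc Un_commute)
  moreover have "last (0 # ?xs) \<le> k * n"
    using last_in_set[of "0 # ?xs"] U_le fin by (auto simp del: last.simps)
  then have "gap_size 0 (sorted_list_of_set (Y k))
             \<le> gap_size (last (0 # ?xs)) (map ((+) (k * n)) (sorted_list_of_set (Y k)))"
    by (intro gap_size_le_shift) simp
  moreover have "(\<Sum>i<k. list_size (sorted_list_of_set (Y i))) \<le> list_size ?xs"
    using Suc by auto
  ultimately show ?case by (simp add: list_size_def gap_size_append)
qed

abbreviation node :: "'a set \<Rightarrow> ('a \<Rightarrow> 'b) \<Rightarrow> 'b \<Rightarrow> 'a set" where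
  "node D g i \<equiv> {d \<in> D. g d = i}"

lemma local_ids_pos: "finite S \<Longrightarrow> d \<in> S \<Longrightarrow> 0 < local_ids S \<pi> d"
  unfolding local_ids_def by (subst card_gt_0_iff) auto

lemma local_ids_le_card: "finite S \<Longrightarrow> local_ids S \<pi> d \<le> card S"
  unfolding local_ids_def by (intro card_mono) auto

lemma local_ids_strict_mono:
  assumes "finite S" "d' \<in> S" "\<pi> d < \<pi> d'"
  shows "local_ids S \<pi> d < local_ids S \<pi> d'"
  unfolding local_ids_def
proof (rule psubset_card_mono)
  show "finite {e \<in> S. \<pi> e \<le> \<pi> d'}" using assms by simp
  have "d' \<in> {e \<in> S. \<pi> e \<le> \<pi> d'}" "d' \<notin> {e \<in> S. \<pi> e \<le> \<pi> d}"
    using assms by auto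
  moreover have "{e \<in> S. \<pi> e \<le> \<pi> d} \<subseteq> {e \<in> S. \<pi> e \<le> \<pi> d'}"
    using assms by auto
  ultimately show "{e \<in> S. \<pi> e \<le> \<pi> d} \<subset> {e \<in> S. \<pi> e \<le> \<pi> d'}"
    by blast
qed

lemma index_size_eq_sum_superset:
  assumes "finite T" "\<Union>S \<subseteq> T"
  shows "index_size S ident = (\<Sum>t\<in>T. list_size (postings S ident t))"
  unfolding index_size_def
proof (rule sum.mono_neutral_left[OF assms])
  show "\<forall>t\<in>T - \<Union>S. list_size (postings S ident t) = 0"
  proof
    fix t assume "t \<in> T - \<Union>S"
    then have "{d \<in> S. t \<in> d} = {}" by auto
    then show "list_size (postings S ident t) = 0"
      unfolding postings_def list_size_def by (simp only:) simp
  qed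
qed

lemma equal_partitions_less: "g \<in> equal_partitions D m \<Longrightarrow> d \<in> D \<Longrightarrow> g d < m"
  unfolding equal_partitions_def by auto

lemma local_ids_node_bounds:
  assumes "finite D" "g \<in> equal_partitions D m" "d \<in> D"
  shows "0 < local_ids (node D g (g d)) \<pi> d" "local_ids (node D g (g d)) \<pi> d \<le> card D div m"
proof -
  show "0 < local_ids (node D g (g d)) \<pi> d" using assms by (intro local_ids_pos) auto
  have "card (node D g (g d)) = card D div m"
    using assms equal_partitions_less[OF assms(2,3)] unfolding equal_partitions_def by auto
  then show "local_ids (node D g (g d)) \<pi> d \<le> card D div m"
    using local_ids_le_card[of "node D g (g d)" \<pi> d] assms(1) by simp
qed

definition block_ids ::
    "'a set set \<Rightarrow> nat \<Rightarrow> ('a set \<Rightarrow> nat) \<Rightarrow> ('a set \<Rightarrow> nat) \<Rightarrow> 'a set \<Rightarrow> nat" where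
  "block_ids D m \<pi> g = (\<lambda>d\<in>D. g d * (card D div m) + local_ids (node D g (g d)) \<pi> d)"

lemma postings_block_ids:
  assumes "g \<in> equal_partitions D m"
  shows "postings D (block_ids D m \<pi> g) t
         = sorted_list_of_set (\<Union>i<m. (+) (i * (card D div m))
             ` local_ids (node D g i) \<pi> ` {d \<in> node D g i. t \<in> d})"
proof -
  have "block_ids D m \<pi> g ` {d \<in> D. t \<in> d}
        = (\<Union>i<m. (+) (i * (card D div m)) ` local_ids (node D g i) \<pi> ` {d \<in> node D g i. t \<in> d})"
    using equal_partitions_less[OF assms] unfolding block_ids_def by (auto simp: image_iff)
  then show ?thesis unfolding postings_def by simp
qed

lemma sum_list_size_postings_nodes_le:
  assumes "finite D" "\<forall>d \<in> D. finite d" and g: "g \<in> equal_partitions D m"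
  shows "(\<Sum>i<m. list_size (postings (node D g i) (local_ids (node D g i) \<pi>) t))
         \<le> list_size (postings D (block_ids D m \<pi> g) t)"
proof -
  let ?ids = "\<lambda>i. local_ids (node D g i) \<pi>"
  have "(\<Sum>i<m. list_size (postings (node D g i) (?ids i) t))
        = (\<Sum>i<m. list_size (sorted_list_of_set (?ids i ` {d \<in> node D g i. t \<in> d})))"
    by (simp add: postings_def)
  also have "\<dots> \<le> list_size (sorted_list_of_set
                     (\<Union>i<m. (+) (i * (card D div m)) ` ?ids i ` {d \<in> node D g i. t \<in> d}))"
  proof (rule list_size_blocks_le, intro allI impI conjI)
    fix i
    show "finite (?ids i ` {d \<in> node D g i. t \<in> d})" using assms by simp
    show "?ids i ` {d \<in> node D g i. t \<in> d} \<subseteq> {1..card D div m}"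
    proof
      fix x assume "x \<in> ?ids i ` {d \<in> node D g i. t \<in> d}"
      then obtain d where "d \<in> D" "g d = i" "x = ?ids i d" by auto
      then show "x \<in> {1..card D div m}"
        using local_ids_node_bounds[OF \<open>finite D\<close> g, of d \<pi>] by auto
    qed
  qed
  also have "\<dots> = list_size (postings D (block_ids D m \<pi> g) t)"
    by (simp add: postings_block_ids[OF g])
  finally show ?thesis .
qed

lemma P_multi_le_P_single_block_ids:
  assumes "finite D" "\<forall>d \<in> D. finite d" and g: "g \<in> equal_partitions D m"
  shows "P_multi D m \<pi> g \<le> P_single D (block_ids D m \<pi> g)"
proof -
  let ?size = "\<lambda>i t. list_size (postings (node D g i) (local_ids (node D g i) \<pi>) t)"
  have "P_multi D m \<pi> g = (\<Sum>i<m. \<Sum>t\<in>\<Union>D. ?size i t)"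
    unfolding P_multi_def Let_def using assms(1,2)
    by (intro sum.cong refl index_size_eq_sum_superset) auto
  also have "\<dots> = (\<Sum>t\<in>\<Union>D. \<Sum>i<m. ?size i t)"
    by (rule sum.swap)
  also have "\<dots> \<le> P_single D (block_ids D m \<pi> g)"
    unfolding P_single_def index_size_def
    using sum_list_size_postings_nodes_le[OF assms] by (rule sum_mono)
  finally show ?thesis .
qed

lemma local_ids_node_eq_card_positions:
  assumes "\<pi> \<in> id_assignments D" "d \<in> D"
  shows "local_ids (node D g (g d)) \<pi> d
         = card {q \<in> {1..card D}. q \<le> \<pi> d \<and> g (inv_into D \<pi> q) = g d}"
proof -
  have inj: "inj_on \<pi> D" and im: "\<pi> ` D = {1..card D}"
    using assms(1) unfolding id_assignments_def bij_betw_def by auto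
  let ?X = "{e \<in> node D g (g d). \<pi> e \<le> \<pi> d}"
  have "\<pi> ` ?X = {q \<in> {1..card D}. q \<le> \<pi> d \<and> g (inv_into D \<pi> q) = g d}"
  proof (intro equalityI subsetI)
    fix q assume "q \<in> \<pi> ` ?X"
    then obtain e where "e \<in> node D g (g d)" "\<pi> e \<le> \<pi> d" "q = \<pi> e" by blast
    then show "q \<in> {q \<in> {1..card D}. q \<le> \<pi> d \<and> g (inv_into D \<pi> q) = g d}"
      using inj im by (auto simp: inv_into_f_f)
  next
    fix q assume q: "q \<in> {q \<in> {1..card D}. q \<le> \<pi> d \<and> g (inv_into D \<pi> q) = g d}"
    then obtain e where "e \<in> D" "q = \<pi> e" using im by (metis (no_types, lifting) imageE mem_Collect_eq)
    then show "q \<in> \<pi> ` ?X" using q inj by (auto simp: inv_into_f_f)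
  qed
  moreover have "card (\<pi> ` ?X) = card ?X"
    using inj by (intro card_image inj_on_subset[OF inj]) auto
  ultimately show ?thesis unfolding local_ids_def by simp
qed

lemma card_positions_less:
  fixes h :: "nat \<Rightarrow> 'b"
  assumes "q \<in> {1..N}" "h q = c" "a < q" "q \<le> b"
  shows "card {p \<in> {1..N}. p \<le> a \<and> h p = c} < card {p \<in> {1..N}. p \<le> b \<and> h p = c}"
proof (rule psubset_card_mono)
  show "finite {p \<in> {1..N}. p \<le> b \<and> h p = c}" by simp
  have "q \<in> {p \<in> {1..N}. p \<le> b \<and> h p = c}" "q \<notin> {p \<in> {1..N}. p \<le> a \<and> h p = c}"
    using assms by auto
  moreover have "{p \<in> {1..N}. p \<le> a \<and> h p = c} \<subseteq> {p \<in> {1..N}. p \<le> b \<and> h p = c}"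
    using assms by auto
  ultimately show "{p \<in> {1..N}. p \<le> a \<and> h p = c} \<subset> {p \<in> {1..N}. p \<le> b \<and> h p = c}"
    by blast
qed

text \<open>An identifier assignment is recovered from the node pattern q \<mapsto> g (\<pi>\<inverse> q) of its positions
  and the local ranks it induces: \<pi> d is the position where the count of positions of node g d
  reaches the local rank of d.\<close>

lemma id_assignments_eqI:
  assumes \<pi>1: "\<pi>1 \<in> id_assignments D" and \<pi>2: "\<pi>2 \<in> id_assignments D"
    and pattern: "\<forall>q \<in> {1..card D}. g (inv_into D \<pi>1 q) = g (inv_into D \<pi>2 q)"
    and ranks: "\<forall>d \<in> D. local_ids (node D g (g d)) \<pi>1 d = local_ids (node D g (g d)) \<pi>2 d"
  shows "\<pi>1 = \<pi>2"
proof -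
  let ?h = "\<lambda>q. g (inv_into D \<pi>1 q)"
  let ?count = "\<lambda>d b. card {q \<in> {1..card D}. q \<le> b \<and> ?h q = g d}"
  have b1: "bij_betw \<pi>1 D {1..card D}" and b2: "bij_betw \<pi>2 D {1..card D}"
    using \<pi>1 \<pi>2 unfolding id_assignments_def by auto
  have "\<pi>1 d = \<pi>2 d" if d: "d \<in> D" for d
  proof -
    have in1: "\<pi>1 d \<in> {1..card D}" and in2: "\<pi>2 d \<in> {1..card D}"
      using b1 b2 d by (auto simp: bij_betw_def)
    have h1: "?h (\<pi>1 d) = g d" using b1 d by (simp add: bij_betw_def inv_into_f_f)
    have h2: "?h (\<pi>2 d) = g d" using pattern in2 b2 d by (simp add: bij_betw_def inv_into_f_f)
    have "{q \<in> {1..card D}. q \<le> \<pi>2 d \<and> g (inv_into D \<pi>2 q) = g d}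
          = {q \<in> {1..card D}. q \<le> \<pi>2 d \<and> ?h q = g d}"
      using pattern by auto
    then have "?count d (\<pi>1 d) = ?count d (\<pi>2 d)"
      using ranks d local_ids_node_eq_card_positions[OF \<pi>1 d, of g]
        local_ids_node_eq_card_positions[OF \<pi>2 d, of g] by simp
    then show ?thesis
      using card_positions_less[where h = ?h, OF in1 h1 _ order_refl, of "\<pi>2 d"]
        card_positions_less[where h = ?h, OF in2 h2 _ order_refl, of "\<pi>1 d"]
      by (cases "\<pi>1 d" "\<pi>2 d" rule: linorder_cases) auto
  qed
  then show ?thesis
    using \<pi>1 \<pi>2 unfolding id_assignments_def by (auto intro: extensionalityI)
qed

definition block_pattern ::
    "'a set set \<Rightarrow> nat \<Rightarrow> ('a set \<Rightarrow> nat) \<Rightarrow> ('a set \<Rightarrow> nat) \<Rightarrow> 'a set \<Rightarrow> nat" where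
  "block_pattern D m \<pi> g = (\<lambda>d\<in>D. g (inv_into D \<pi> (block_ids D m \<pi> g d)))"

context
  fixes D :: "'a set set" and m :: nat
  assumes finite_D: "finite D" and m_dvd: "m dvd card D"
begin

lemma block_ids_div_eq:
  assumes g: "g \<in> equal_partitions D m" and d: "d \<in> D"
  shows "(block_ids D m \<pi> g d - 1) div (card D div m) = g d"
    and "block_ids D m \<pi> g d \<in> {1..card D}"
proof -
  define n where "n = card D div m"
  define l where "l = local_ids (node D g (g d)) \<pi> d"
  have l: "0 < l" "l \<le> n" and gd: "g d < m"
    using local_ids_node_bounds[OF finite_D g d] equal_partitions_less[OF g d]
    unfolding l_def n_def by auto
  have ids: "block_ids D m \<pi> g d = g d * n + l"
    using d unfolding block_ids_def n_def l_def by simp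
  have card_D: "card D = m * n" using m_dvd unfolding n_def by simp
  obtain k where k: "l = Suc k" "k < n" using l by (cases l) auto
  then have "(g d * n + l - 1) div n = g d" by simp
  then show "(block_ids D m \<pi> g d - 1) div (card D div m) = g d"
    using ids by (simp add: n_def)
  have "(g d + 1) * n \<le> m * n" using gd by (intro mult_le_mono1) simp
  then show "block_ids D m \<pi> g d \<in> {1..card D}" using ids l card_D by (simp add: algebra_simps)
qed

lemma block_ids_in_id_assignments:
  assumes \<pi>: "\<pi> \<in> id_assignments D" and g: "g \<in> equal_partitions D m"
  shows "block_ids D m \<pi> g \<in> id_assignments D"
proof -
  have inj_\<pi>: "inj_on \<pi> D" using \<pi> unfolding id_assignments_def bij_betw_def by auto
  have inj: "inj_on (block_ids D m \<pi> g) D"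
  proof (rule inj_onI)
    fix d1 d2 assume d: "d1 \<in> D" "d2 \<in> D" and eq: "block_ids D m \<pi> g d1 = block_ids D m \<pi> g d2"
    then have same_node: "g d1 = g d2"
      using block_ids_div_eq(1)[OF g d(1)] block_ids_div_eq(1)[OF g d(2)] by metis
    let ?S = "node D g (g d1)"
    have "local_ids ?S \<pi> d1 = local_ids ?S \<pi> d2"
      using eq d same_node unfolding block_ids_def by simp
    moreover have "d1 \<in> ?S" "d2 \<in> ?S" "finite ?S" using d same_node finite_D by auto
    ultimately have "\<pi> d1 = \<pi> d2"
      using local_ids_strict_mono[of ?S d1 \<pi> d2] local_ids_strict_mono[of ?S d2 \<pi> d1]
      by (cases "\<pi> d1" "\<pi> d2" rule: linorder_cases) auto
    then show "d1 = d2" using inj_\<pi> d by (meson inj_onD)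
  qed
  have "block_ids D m \<pi> g ` D \<subseteq> {1..card D}" using block_ids_div_eq(2)[OF g] by auto
  moreover have "card (block_ids D m \<pi> g ` D) = card {1..card D}" using card_image[OF inj] by simp
  ultimately have "block_ids D m \<pi> g ` D = {1..card D}" by (intro card_subset_eq) auto
  moreover have "block_ids D m \<pi> g \<in> extensional D" by (simp add: block_ids_def)
  ultimately show ?thesis unfolding id_assignments_def bij_betw_def using inj by simp
qed

lemma block_pattern_in_equal_partitions:
  assumes \<pi>: "\<pi> \<in> id_assignments D" and g: "g \<in> equal_partitions D m"
  shows "block_pattern D m \<pi> g \<in> equal_partitions D m"
proof -
  define \<sigma> where "\<sigma> = inv_into D \<pi> \<circ> block_ids D m \<pi> g"
  have "bij_betw (block_ids D m \<pi> g) D {1..card D}"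
    using block_ids_in_id_assignments[OF assms] unfolding id_assignments_def by auto
  moreover have "bij_betw (inv_into D \<pi>) {1..card D} D"
    using \<pi> unfolding id_assignments_def by (auto intro: bij_betw_inv_into)
  ultimately have \<sigma>: "bij_betw \<sigma> D D" unfolding \<sigma>_def by (rule bij_betw_trans)
  have pattern: "block_pattern D m \<pi> g d = g (\<sigma> d)" if "d \<in> D" for d
    using that unfolding block_pattern_def \<sigma>_def by simp
  have "card (node D (block_pattern D m \<pi> g) i) = card (node D g i)" for i
  proof -
    have "node D (block_pattern D m \<pi> g) i = {d \<in> D. \<sigma> d \<in> node D g i}"
      using pattern \<sigma> by (auto simp: bij_betw_def)
    moreover have "\<sigma> ` {d \<in> D. \<sigma> d \<in> node D g i} = node D g i"
    proof (intro equalityI subsetI)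
      fix e assume "e \<in> node D g i"
      moreover obtain d where "d \<in> D" "e = \<sigma> d"
        using \<open>e \<in> node D g i\<close> \<sigma> unfolding bij_betw_def by auto
      ultimately show "e \<in> \<sigma> ` {d \<in> D. \<sigma> d \<in> node D g i}" by auto
    qed auto
    then have "bij_betw \<sigma> {d \<in> D. \<sigma> d \<in> node D g i} (node D g i)"
      using \<sigma> by (rule bij_betw_subset[rotated 2]) auto
    ultimately show ?thesis by (simp add: bij_betw_same_card)
  qed
  moreover have "block_pattern D m \<pi> g \<in> D \<rightarrow>\<^sub>E {..<m}"
  proof (rule PiE_I)
    show "block_pattern D m \<pi> g d \<in> {..<m}" if "d \<in> D" for d
      using that pattern equal_partitions_less[OF g] bij_betw_apply[OF \<sigma>] by simp
    show "block_pattern D m \<pi> g d = undefined" if "d \<notin> D" for d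
      using that by (simp add: block_pattern_def)
  qed
  ultimately show ?thesis using g unfolding equal_partitions_def by auto
qed

lemma block_map_inj_on:
  "inj_on (\<lambda>(\<pi>, g). (block_ids D m \<pi> g, block_pattern D m \<pi> g))
     (id_assignments D \<times> equal_partitions D m)"
proof (rule inj_onI, clarsimp)
  fix \<pi>1 g1 \<pi>2 g2
  assume \<pi>: "\<pi>1 \<in> id_assignments D" "\<pi>2 \<in> id_assignments D"
    and g: "g1 \<in> equal_partitions D m" "g2 \<in> equal_partitions D m"
    and ids: "block_ids D m \<pi>1 g1 = block_ids D m \<pi>2 g2"
    and pattern: "block_pattern D m \<pi>1 g1 = block_pattern D m \<pi>2 g2"
  have "g1 d = g2 d" if "d \<in> D" for d
    using block_ids_div_eq(1)[OF g(1) that, of \<pi>1] block_ids_div_eq(1)[OF g(2) that, of \<pi>2] ids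
    by simp
  then have "g1 = g2"
    using g by (intro extensionalityI[of _ D]) (auto simp: equal_partitions_def PiE_def)
  have "g1 (inv_into D \<pi>1 q) = g1 (inv_into D \<pi>2 q)" if "q \<in> {1..card D}" for q
  proof -
    have "block_ids D m \<pi>1 g1 ` D = {1..card D}"
      using block_ids_in_id_assignments[OF \<pi>(1) g(1)] unfolding id_assignments_def bij_betw_def by simp
    then have "q \<in> block_ids D m \<pi>1 g1 ` D" using that by simp
    then obtain d where d: "d \<in> D" "q = block_ids D m \<pi>1 g1 d" by blast
    have "block_pattern D m \<pi>1 g1 d = block_pattern D m \<pi>2 g2 d" using pattern by simp
    then show ?thesis
      using d fun_cong[OF ids, of d] \<open>g1 = g2\<close> unfolding block_pattern_def by simp
  qed
  moreover have "local_ids (node D g1 (g1 d)) \<pi>1 d = local_ids (node D g1 (g1 d)) \<pi>2 d" if "d \<in> D" for d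
    using fun_cong[OF ids, of d] that \<open>g1 = g2\<close> by (simp add: block_ids_def)
  ultimately show "\<pi>1 = \<pi>2 \<and> g1 = g2"
    using id_assignments_eqI[OF \<pi>] \<open>g1 = g2\<close> by blast
qed

end

lemma sum_le_sum_inj_endo:
  fixes f g :: "'a \<Rightarrow> 'b::ordered_comm_monoid_add"
  assumes "finite A" "\<Psi> ` A \<subseteq> A" "inj_on \<Psi> A" "\<And>x. x \<in> A \<Longrightarrow> f x \<le> g (\<Psi> x)"
  shows "sum f A \<le> sum g A"
proof -
  have "sum f A \<le> sum (g \<circ> \<Psi>) A" using assms(4) by (intro sum_mono) simp
  also have "\<dots> = sum g (\<Psi> ` A)" by (rule sum.reindex[OF assms(3), symmetric])
  also have "\<Psi> ` A = A" using endo_inj_surj assms(1-3) .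
  finally show ?thesis .
qed

lemma finite_id_assignments: "finite D \<Longrightarrow> finite (id_assignments D)"
proof (rule finite_subset)
  show "id_assignments D \<subseteq> D \<rightarrow>\<^sub>E {1..card D}"
    unfolding id_assignments_def by (auto simp: PiE_def bij_betw_def)
  assume "finite D"
  then show "finite (D \<rightarrow>\<^sub>E {1..card D})" by (simp add: finite_PiE)
qed

lemma finite_equal_partitions: "finite D \<Longrightarrow> finite (equal_partitions D m)"
  by (rule finite_subset[of _ "D \<rightarrow>\<^sub>E {..<m}"]) (auto simp: equal_partitions_def intro: finite_PiE)

theorem mainTheorem2:
  fixes D :: "'t set set" and m :: nat
  assumes "finite D" and "\<forall>d \<in> D. finite d" and "m > 0" and "m dvd card D"
  shows "(\<Sum>\<pi> \<in> id_assignments D. \<Sum>g \<in> equal_partitions D m.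
            real (P_single D \<pi>) - real (P_multi D m \<pi> g))
         / real (card (id_assignments D) * card (equal_partitions D m)) \<ge> 0"
proof -
  let ?AG = "id_assignments D \<times> equal_partitions D m"
  let ?\<Psi> = "\<lambda>(\<pi>, g). (block_ids D m \<pi> g, block_pattern D m \<pi> g)"
  have "(\<Sum>x\<in>?AG. real (P_multi D m (fst x) (snd x))) \<le> (\<Sum>x\<in>?AG. real (P_single D (fst x)))"
  proof (rule sum_le_sum_inj_endo[where \<Psi> = ?\<Psi>])
    show "finite ?AG" using assms(1) by (simp add: finite_id_assignments finite_equal_partitions)
    show "?\<Psi> ` ?AG \<subseteq> ?AG"
      using block_ids_in_id_assignments block_pattern_in_equal_partitions assms by auto
    show "inj_on ?\<Psi> ?AG" using block_map_inj_on assms by blast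
    show "real (P_multi D m (fst x) (snd x)) \<le> real (P_single D (fst (?\<Psi> x)))" if "x \<in> ?AG" for x
      using P_multi_le_P_single_block_ids[OF assms(1,2)] that by (auto simp: split_beta)
  qed
  moreover have "(\<Sum>\<pi> \<in> id_assignments D. \<Sum>g \<in> equal_partitions D m.
                    real (P_single D \<pi>) - real (P_multi D m \<pi> g))
     = (\<Sum>x\<in>?AG. real (P_single D (fst x))) - (\<Sum>x\<in>?AG. real (P_multi D m (fst x) (snd x)))"
    by (simp only: sum.cartesian_product split_def sum_subtractf)
  ultimately show ?thesis by simp
qed

end
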